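(* Let $1<p<\infty$ and let $c\colon\mathbb{R}^d\to\mathbb{R}$ be a cost satisfying the assumptions in the context. Let $\lambda,\mu$ be non-negative finite measures on $\mathbb{R}^d$ with $\lambda(\mathbb{R}^d)=\mu(\mathbb{R}^d)$, and let $\pi\in\Pi(\lambda,\mu)$ have $c$-cyclically monotone support. There exists $\varepsilon_0>0$ depending only on $d,p,\Lambda$ such that if $E(4)+D(4)\le\varepsilon_0$, then $$\int_2^3\int_{\Omega_R\cap\{\exists t\in[0,1]\colon X(t)\in\partial B_R\}}c(x-y)\,\mathrm{d}\pi\,\mathrm{d}R\lesssim (E(4)+D(4))^{1+\frac{1}{p+d}},$$ $$\int_2^3\pi\big(\Omega_R\cap\{\exists t\in[0,1]\colon X(t)\in\partial B_R\}\big)\,\mathrm{d}R\lesssim (E(4)+D(4))^{\frac{1}{p+d}}.$$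
   Context: $c\colon\mathbb{R}^d\to\mathbb{R}$ is $C^1$ and there is $\Lambda\ge1$ such that for all $x,y\in\mathbb{R}^d$, $s\in[0,1]$: (i) $\Lambda^{-1}s(1-s)V_p(x,y)+c(sx+(1-s)y)\le s\,c(x)+(1-s)c(y)$ with $V_p(x,y)=(|x|^2+|y|^2)^{\frac{p-2}{2}}|x-y|^2$; (ii) $\Lambda^{-1}|x|^p\le c(x)\le\Lambda|x|^p$; (iii) $|c(x)-c(y)|\le\Lambda(|x|+|y|)^{p-1}|x-y|$; (iv) $|\nabla c(x)-\nabla c(y)|\le\Lambda(|x|+|y|)^{p-2}|x-y|$. A set $S$ is $c$-cyclically monotone if for all $N$ and $(x_i,y_i)\in S$, $\sum_i c(x_i-y_i)\le\sum_i c(x_i-y_{i+1})$ with $y_{N+1}=y_1$. $B_r$ is the open ball of radius $r$ at $0$; $\#_R=(B_R\times\mathbb{R}^d)\cup(\mathbb{R}^d\times B_R)$. For $(x,y)$ write $X(t)=tx+(1-t)y$, $t\in[0,1]$, and $\Omega_R=\{(x,y)\in\#_3\colon \exists t\in[0,1],\ X(t)\in\overline{B_R}\}$. $\kappa_{\lambda,R}=\lambda(B_R)/|B_R|$, $\kappa_{\mu,R}=\mu(B_R)/|B_R|$; $W_p^p(\alpha,\beta)=\inf_{\gamma\in\Pi(\alpha,\beta)}\int|x-y|^p\,\mathrm{d}\gamma$. $E(R)=\frac{1}{|B_R|}\int_{\#_R}c(x-y)\,\mathrm{d}\pi$ and $D(R)=\frac{1}{|B_R|}W_p^p(\lambda\llcorner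 B_R,\kappa_{\lambda,R}\,\mathrm{d}x\llcorner B_R)+\frac{R^p}{\kappa_{\lambda,R}^{p-1}}|\kappa_{\lambda,R}-1|^p+\frac{1}{|B_R|}W_p^p(\mu\llcorner B_R,\kappa_{\mu,R}\,\mathrm{d}x\llcorner B_R)+\frac{R^p}{\kappa_{\mu,R}^{p-1}}|\kappa_{\mu,R}-1|^p$. $A\lesssim B$ means $A\le CB$ with $C$ depending only on $d,p,\Lambda$. *)

theory Defs
  imports "HOL-Analysis.Analysis"
begin

definition cost_assms :: "real \<Rightarrow> real \<Rightarrow> ('a::euclidean_space \<Rightarrow> real) \<Rightarrow> bool" where
  "cost_assms p \<Lambda> c \<longleftrightarrow>
     (\<exists>grad::'a \<Rightarrow> 'a.
        (\<forall>x. (c has_derivative (\<lambda>h. grad x \<bullet> h)) (at x)) \<and>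
        continuous_on UNIV grad \<and>
        (\<forall>x y. norm (grad x - grad y) \<le> \<Lambda> * (norm x + norm y) powr (p - 2) * norm (x - y))) \<and>
     (\<forall>x y. \<forall>s\<in>{0..1::real}.
        (1 / \<Lambda>) * s * (1 - s) * ((norm x ^ 2 + norm y ^ 2) powr ((p - 2) / 2) * norm (x - y) ^ 2)
          + c (s *\<^sub>R x + (1 - s) *\<^sub>R y) \<le> s * c x + (1 - s) * c y) \<and>
     (\<forall>x. (1 / \<Lambda>) * norm x powr p \<le> c x \<and> c x \<le> \<Lambda> * norm x powr p) \<and>
     (\<forall>x y. \<bar>c x - c y\<bar> \<le> \<Lambda> * (norm x + norm y) powr (p - 1) * norm (x - y))"

definition c_cyclically_monotone :: "('a::real_normed_vector \<Rightarrow> real) \<Rightarrow> ('a \<times> 'a) set \<Rightarrow> bool" where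
  "c_cyclically_monotone c S \<longleftrightarrow>
     (\<forall>N::nat. \<forall>xs ys :: nat \<Rightarrow> 'a. N \<ge> 1 \<and> (\<forall>i<N. (xs i, ys i) \<in> S) \<longrightarrow>
        (\<Sum>i<N. c (xs i - ys i)) \<le> (\<Sum>i<N. c (xs i - ys ((i + 1) mod N))))"

definition msupp :: "'b::topological_space measure \<Rightarrow> 'b set" where
  "msupp M = {z. \<forall>U. open U \<and> z \<in> U \<longrightarrow> emeasure M U > 0}"

definition couplings :: "'a::euclidean_space measure \<Rightarrow> 'a measure \<Rightarrow> ('a \<times> 'a) measure set" where
  "couplings \<alpha> \<beta> = {\<gamma>. sets \<gamma> = sets (borel \<Otimes>\<^sub>M borel) \<and>
       distr \<gamma> borel fst = \<alpha> \<and> distr \<gamma> borel snd = \<beta>}"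

definition Wpp :: "real \<Rightarrow> 'a::euclidean_space measure \<Rightarrow> 'a measure \<Rightarrow> ennreal" where
  "Wpp p \<alpha> \<beta> = (INF \<gamma>\<in>couplings \<alpha> \<beta>. \<integral>\<^sup>+ z. ennreal (norm (fst z - snd z) powr p) \<partial>\<gamma>)"

definition vol_ball :: "real \<Rightarrow> 'a::euclidean_space itself \<Rightarrow> real" where
  "vol_ball R _ = measure lborel (ball (0::'a) R)"

definition kappa :: "'a::euclidean_space measure \<Rightarrow> real \<Rightarrow> real" where
  "kappa M R = measure M (ball 0 R) / vol_ball R TYPE('a)"

definition hashset :: "real \<Rightarrow> ('a::real_normed_vector \<times> 'a) set" where
  "hashset R = {z. fst z \<in> ball 0 R \<or> snd z \<in> ball 0 R}"

definition E_fun :: "('a::euclidean_space \<Rightarrow> real) \<Rightarrow> ('a \<times> 'a) measure \<Rightarrow> real \<Rightarrow> ennreal" where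
  "E_fun c \<pi> R = (\<integral>\<^sup>+ z \<in> hashset R. ennreal (c (fst z - snd z)) \<partial>\<pi>) / ennreal (vol_ball R TYPE('a))"

text \<open>One half of D(R): the contribution of a single marginal M.
  Division by kappa^(p-1) = 0 yields infinity (ennreal division).\<close>
definition D_part :: "real \<Rightarrow> 'a::euclidean_space measure \<Rightarrow> real \<Rightarrow> ennreal" where
  "D_part p M R =
     Wpp p (density M (indicator (ball 0 R)))
           (density lborel (\<lambda>x. ennreal (kappa M R) * indicator (ball 0 R) x))
       / ennreal (vol_ball R TYPE('a))
     + ennreal (R powr p * \<bar>kappa M R - 1\<bar> powr p) / ennreal (kappa M R powr (p - 1))"

definition D_fun :: "real \<Rightarrow> 'a::euclidean_space measure \<Rightarrow> 'a measure \<Rightarrow> real \<Rightarrow> ennreal" where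
  "D_fun p lam mu R = D_part p lam R + D_part p mu R"

definition Omega :: "real \<Rightarrow> ('a::real_normed_vector \<times> 'a) set" where
  "Omega R = {z \<in> hashset 3. \<exists>t\<in>{0..1::real}. t *\<^sub>R fst z + (1 - t) *\<^sub>R snd z \<in> cball 0 R}"

definition Omega_bdry :: "real \<Rightarrow> ('a::real_normed_vector \<times> 'a) set" where
  "Omega_bdry R = Omega R \<inter> {z. \<exists>t\<in>{0..1::real}. t *\<^sub>R fst z + (1 - t) *\<^sub>R snd z \<in> sphere 0 R}"

end

theory Submission
  imports Defs
begin

text \<open>
  Transport rays of a \<open>c\<close>-cyclically monotone plan repel each other. If \<open>(x, y)\<close> lies in
  the support and \<open>m = min |x - y| 1\<close>, let \<open>z\<close> be the point at distance \<open>m/2\<close> from \<open>x\<close>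
  on the segment \<open>[x, y]\<close>. Every \<open>(x', y')\<close> in the support with \<open>|x' - z| < \<eta> m\<close> has
  \<open>|x' - y'| > \<eta> m\<close>: otherwise exchanging partners would gain more from the uniform
  convexity (i) than it loses by the Lipschitz bound (iii). So all \<open>\<lambda>\<close>-mass in
  \<open>B\<^sub>\<eta>\<^sub>m(z)\<close> travels at least \<open>\<eta> m\<close>, costing \<open>\<gtrsim> m\<^sup>p \<lambda>(B\<^sub>\<eta>\<^sub>m(z))\<close>, which is at most
  \<open>E\<close>; and since \<open>\<lambda>\<close> is \<open>W\<^sub>p\<close>-close to an almost uniform density, \<open>\<lambda>(B\<^sub>\<eta>\<^sub>m(z)) \<gtrsim> m\<^sup>d\<close>.
  Hence \<open>|x - y| \<le> \<delta> \<sim> (E + D)\<^bsup>1/(p+d)\<^esup>\<close> on the support inside \<open>#\<^sub>3\<close>.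
  A pair whose segment meets \<open>\<partial>B\<^sub>R\<close> then has \<open>||x| - R| \<le> \<delta>\<close>, so integrating over \<open>R\<close>
  (Fubini) yields the factor \<open>2\<delta>\<close> in front of the cost, resp. the mass, of \<open>#\<^sub>3\<close>,
  which are \<open>\<lesssim> E + D\<close>, resp. \<open>\<lesssim> 1\<close>.
\<close>

section \<open>Supports and couplings\<close>

lemma AE_in_msupp:
  fixes M :: "'b::second_countable_topology measure"
  assumes "sets M = sets borel"
  shows "AE z in M. z \<in> msupp M"
proof -
  define \<F> where "\<F> = {U. open U \<and> emeasure M U = 0}"
  obtain \<F>' where \<F>': "\<F>' \<subseteq> \<F>" "countable \<F>'" "\<Union>\<F>' = \<Union>\<F>"
    using Lindelof[of \<F>] unfolding \<F>_def by blast
  have "(\<Union>U\<in>\<F>'. U) \<in> null_sets M"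
    using \<F>' assms by (intro null_sets_UN') (auto simp: \<F>_def null_sets_def)
  moreover have "UNIV - msupp M = \<Union>\<F>"
    unfolding \<F>_def msupp_def by (auto simp: not_less)
  ultimately have "UNIV - msupp M \<in> null_sets M"
    using \<F>'(3) by simp
  from AE_not_in[OF this] show ?thesis
    by simp
qed

lemma couplings_sets:
  assumes "\<gamma> \<in> couplings \<alpha> \<beta>"
  shows "sets \<gamma> = sets borel" "space \<gamma> = UNIV"
proof -
  have "sets \<gamma> = sets (borel \<Otimes>\<^sub>M borel)"
    using assms unfolding couplings_def by simp
  then show "sets \<gamma> = sets borel"
    by (metis borel_prod)
  then show "space \<gamma> = UNIV"
    by (metis sets_eq_imp_space_eq space_borel)
qed

lemma measurable_couplings_fst_snd:
  assumes "\<gamma> \<in> couplings \<alpha> \<beta>"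
  shows "fst \<in> borel_measurable \<gamma>" "snd \<in> borel_measurable \<gamma>"
proof -
  have "sets \<gamma> = sets (borel \<Otimes>\<^sub>M borel)"
    using assms unfolding couplings_def by simp
  from measurable_cong_sets[OF this refl]
  show "fst \<in> borel_measurable \<gamma>" "snd \<in> borel_measurable \<gamma>"
    by auto
qed

lemma emeasure_couplings_vimage:
  assumes "\<gamma> \<in> couplings \<alpha> \<beta>" "B \<in> sets borel"
  shows "emeasure \<gamma> (fst -` B) = emeasure \<alpha> B" "emeasure \<gamma> (snd -` B) = emeasure \<beta> B"
proof -
  have "distr \<gamma> borel fst = \<alpha>" "distr \<gamma> borel snd = \<beta>"
    using assms(1) unfolding couplings_def by simp_all
  then show "emeasure \<gamma> (fst -` B) = emeasure \<alpha> B" "emeasure \<gamma> (snd -` B) = emeasure \<beta> B"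
    using emeasure_distr[OF measurable_couplings_fst_snd(1)[OF assms(1)] assms(2)]
      emeasure_distr[OF measurable_couplings_fst_snd(2)[OF assms(1)] assms(2)]
    by (simp_all add: couplings_sets(2)[OF assms(1)])
qed

lemma couplings_marginal_sets:
  assumes "\<gamma> \<in> couplings \<alpha> \<beta>"
  shows "sets \<alpha> = sets borel" "sets \<beta> = sets borel"
  using assms unfolding couplings_def by auto

lemma couplings_finite_measure:
  assumes "\<gamma> \<in> couplings \<alpha> \<beta>" "finite_measure \<alpha>"
  shows "finite_measure \<gamma>"
proof
  have "emeasure \<gamma> (space \<gamma>) = emeasure \<alpha> UNIV"
    using emeasure_couplings_vimage(1)[OF assms(1), of UNIV] couplings_sets(2)[OF assms(1)] by simp
  then show "emeasure \<gamma> (space \<gamma>) \<noteq> \<infinity>"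
    using assms(2) by (simp add: finite_measure.emeasure_finite)
qed

lemma emeasure_hashset_le:
  fixes \<gamma> :: "('a::euclidean_space \<times> 'a) measure"
  assumes "\<gamma> \<in> couplings \<alpha> \<beta>"
  shows "emeasure \<gamma> (hashset R) \<le> emeasure \<alpha> (ball 0 R) + emeasure \<beta> (ball 0 R)"
proof -
  have sets: "fst -` ball 0 R \<in> sets \<gamma>" "snd -` ball 0 R \<in> sets \<gamma>"
    unfolding couplings_sets(1)[OF assms] by (simp_all add: borel_open open_vimage_fst open_vimage_snd)
  have "hashset R = fst -` ball (0::'a) R \<union> snd -` ball 0 R"
    by (auto simp: hashset_def)
  then have "emeasure \<gamma> (hashset R) \<le> emeasure \<gamma> (fst -` ball 0 R) + emeasure \<gamma> (snd -` ball 0 R)"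
    using emeasure_subadditive[OF sets] by (simp only:)
  then show ?thesis
    using emeasure_couplings_vimage[OF assms] by simp
qed

text \<open>A coupling carries the \<open>\<beta>\<close>-mass of \<open>B\<^sub>r(z)\<close> either from \<open>\<alpha>\<close>-mass in \<open>B\<^sub>2\<^sub>r(z)\<close> or over
  a distance at least \<open>r\<close>.\<close>

lemma Wpp_ball_bound:
  fixes \<alpha> \<beta> :: "'a::euclidean_space measure"
  assumes "0 < p" "0 \<le> r"
  shows "ennreal (r powr p) * emeasure \<beta> (ball z r)
           \<le> Wpp p \<alpha> \<beta> + ennreal (r powr p) * emeasure \<alpha> (ball z (2 * r))"
proof (cases "ennreal (r powr p) * emeasure \<alpha> (ball z (2 * r)) = \<infinity>")
  case False
  define B where "B = ball z r"
  define B' where "B' = ball z (2 * r)"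
  define a where "a = ennreal (r powr p) * emeasure \<alpha> B'"
  have "ennreal (r powr p) * emeasure \<beta> B - a \<le> (\<integral>\<^sup>+ s. ennreal (norm (fst s - snd s) powr p) \<partial>\<gamma>)"
    if \<gamma>: "\<gamma> \<in> couplings \<alpha> \<beta>" for \<gamma>
  proof -
    define A where "A = (space \<gamma> - fst -` B') \<inter> snd -` B"
    have sets: "fst -` B' \<in> sets \<gamma>" "snd -` B \<in> sets \<gamma>"
      unfolding couplings_sets(1)[OF \<gamma>] B_def B'_def
      by (simp_all add: borel_open open_vimage_fst open_vimage_snd)
    then have A: "A \<in> sets \<gamma>"
      unfolding A_def by blast
    have "emeasure \<beta> B = emeasure \<gamma> (snd -` B)"
      using emeasure_couplings_vimage(2)[OF \<gamma>] by (simp add: B_def)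
    also have "\<dots> \<le> emeasure \<gamma> (A \<union> fst -` B')"
      using A sets by (intro emeasure_mono) (auto simp: A_def couplings_sets(2)[OF \<gamma>])
    also have "\<dots> \<le> emeasure \<gamma> A + emeasure \<alpha> B'"
      using emeasure_subadditive[OF A sets(1)] emeasure_couplings_vimage(1)[OF \<gamma>]
      by (simp add: B'_def)
    finally have "ennreal (r powr p) * emeasure \<beta> B \<le> ennreal (r powr p) * emeasure \<gamma> A + a"
      unfolding a_def distrib_left[symmetric] by (rule mult_left_mono) simp
    moreover have "ennreal (r powr p) * emeasure \<gamma> A
                     \<le> (\<integral>\<^sup>+ s. ennreal (norm (fst s - snd s) powr p) \<partial>\<gamma>)"
    proof -
      have "r \<le> norm (fst s - snd s)" if "s \<in> A" for s
        using that dist_triangle[of z "fst s" "snd s"]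
        by (auto simp: A_def B_def B'_def dist_norm norm_minus_commute)
      then have "ennreal (r powr p) * indicator A s \<le> ennreal (norm (fst s - snd s) powr p)" for s
        using assms by (auto intro!: powr_mono2 split: split_indicator)
      then have "(\<integral>\<^sup>+ s. ennreal (r powr p) * indicator A s \<partial>\<gamma>)
                   \<le> (\<integral>\<^sup>+ s. ennreal (norm (fst s - snd s) powr p) \<partial>\<gamma>)"
        by (rule nn_integral_mono)
      then show ?thesis
        by (simp add: nn_integral_cmult_indicator[OF A])
    qed
    ultimately have "ennreal (r powr p) * emeasure \<beta> B
                       \<le> a + (\<integral>\<^sup>+ s. ennreal (norm (fst s - snd s) powr p) \<partial>\<gamma>)"
      by (simp add: add.commute add_right_mono order_trans)
    then show ?thesis
      using False by (simp add: ennreal_minus_le_iff a_def B'_def)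
  qed
  then have "ennreal (r powr p) * emeasure \<beta> B - a \<le> Wpp p \<alpha> \<beta>"
    unfolding Wpp_def by (rule INF_greatest)
  then show ?thesis
    by (simp add: ennreal_minus_le_iff a_def B_def B'_def add.commute)
qed (simp add: top_add)

section \<open>Consequences of small energy and data terms\<close>

lemma le_of_divide_ennreal_le:
  assumes "x / ennreal V \<le> ennreal q" "0 < V"
  shows "x \<le> ennreal (q * V)"
proof -
  have "x = x / ennreal V * ennreal V"
    using assms(2) by (simp add: ennreal_divide_times)
  also have "\<dots> \<le> ennreal q * ennreal V"
    using assms(1) by (rule mult_right_mono) simp
  finally show ?thesis
    using assms(2) by (simp add: ennreal_mult'')
qed

lemma vol_ball_eq: "0 \<le> R \<Longrightarrow> vol_ball R TYPE('a::euclidean_space) = unit_ball_vol DIM('a) * R ^ DIM('a)"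
  unfolding vol_ball_def by (simp add: measure_def emeasure_ball)

lemma vol_ball_pos: "0 < R \<Longrightarrow> 0 < vol_ball R TYPE('a::euclidean_space)"
  by (simp add: vol_ball_eq)

lemma kappa_nonneg: "0 \<le> kappa M R"
  unfolding kappa_def vol_ball_def by simp

lemma Wpp_le_of_D_part:
  fixes M :: "'a::euclidean_space measure"
  assumes "D_part p M R \<le> ennreal q" "0 < R"
  shows "Wpp p (density M (indicator (ball 0 R)))
             (density lborel (\<lambda>x::'a. ennreal (kappa M R) * indicator (ball 0 R) x))
           \<le> ennreal (q * vol_ball R TYPE('a))"
  using assms(1) vol_ball_pos[OF assms(2)]
  by (intro le_of_divide_ennreal_le) (auto simp: D_part_def elim!: order_trans[rotated])

lemma kappa_bounds_of_D_part:
  fixes M :: "'a::euclidean_space measure"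
  assumes p: "1 < p" and R: "2 \<le> R" and D: "D_part p M R \<le> 1"
  shows "1 / 2 \<le> kappa M R" "kappa M R \<le> 2"
proof -
  define k where "k = kappa M R"
  have T: "ennreal (R powr p * \<bar>k - 1\<bar> powr p) / ennreal (k powr (p - 1)) \<le> 1"
    using D unfolding D_part_def k_def by (auto elim!: order_trans[rotated])
  \<comment> \<open>for \<open>k = 0\<close> the second summand of \<open>D_part\<close> is a division by zero in \<open>ennreal\<close>, i.e. \<open>\<infinity>\<close>\<close>
  have "k \<noteq> 0"
  proof
    assume "k = 0"
    then have "ennreal (R powr p * \<bar>k - 1\<bar> powr p) / ennreal (k powr (p - 1)) = \<infinity>"
      using R by (simp add: divide_ennreal_def ennreal_mult_top)
    then show False
      using T by (simp add: top_unique)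
  qed
  then have k: "0 < k"
    using kappa_nonneg[of M R] by (simp add: k_def)
  have "ennreal (R powr p * \<bar>k - 1\<bar> powr p) / ennreal (k powr (p - 1))
          = ennreal (R powr p * \<bar>k - 1\<bar> powr p / k powr (p - 1))"
    using k by (intro divide_ennreal) auto
  then have "R powr p * \<bar>k - 1\<bar> powr p / k powr (p - 1) \<le> 1"
    using T by (simp add: ennreal_le_1)
  then have key: "(R * \<bar>k - 1\<bar>) powr p \<le> k powr (p - 1)"
    using k R by (simp add: powr_mult)
  show "1 / 2 \<le> k"
  proof (rule ccontr)
    assume "\<not> 1 / 2 \<le> k"
    then have "2 * (1 / 2) < R * \<bar>k - 1\<bar>"
      using R by (intro mult_le_less_imp_less) auto
    then have "1 < (R * \<bar>k - 1\<bar>) powr p"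
      using p by simp
    moreover have "k powr (p - 1) < 1 powr (p - 1)"
      using \<open>\<not> 1 / 2 \<le> k\<close> k p by (intro powr_less_mono2) auto
    ultimately show False
      using key by simp
  qed
  show "k \<le> 2"
  proof (rule ccontr)
    assume "\<not> k \<le> 2"
    moreover have "2 * \<bar>k - 1\<bar> \<le> R * \<bar>k - 1\<bar>"
      using R by (intro mult_right_mono) auto
    ultimately have "k powr p \<le> (R * \<bar>k - 1\<bar>) powr p"
      using k p by (intro powr_mono2) auto
    moreover have "k powr (p - 1) < k powr p"
      using \<open>\<not> k \<le> 2\<close> by (intro powr_less_mono) auto
    ultimately show False
      using key by simp
  qed
qed

lemma E_fun_D_fun_le_parts:
  assumes "E_fun c \<pi> R + D_fun p lam mu R \<le> x"
  shows "E_fun c \<pi> R \<le> x" "D_part p lam R \<le> x" "D_part p mu R \<le> x"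
proof -
  have "E_fun c \<pi> R \<le> E_fun c \<pi> R + D_fun p lam mu R"
    by (rule add_increasing2) simp_all
  then show "E_fun c \<pi> R \<le> x"
    using assms by (rule order_trans)
  have "D_part p lam R \<le> E_fun c \<pi> R + D_fun p lam mu R"
    unfolding D_fun_def by (rule add_increasing[OF zero_le], rule add_increasing2[OF zero_le order_refl])
  then show "D_part p lam R \<le> x"
    using assms by (rule order_trans)
  have "D_part p mu R \<le> E_fun c \<pi> R + D_fun p lam mu R"
    unfolding D_fun_def by (rule add_increasing[OF zero_le], rule add_increasing[OF zero_le order_refl])
  then show "D_part p mu R \<le> x"
    using assms by (rule order_trans)
qed

lemma D_part_ball_bound:
  fixes M :: "'a::euclidean_space measure"
  assumes M: "sets M = sets borel" "finite_measure M"
    and p: "0 < p" and r: "0 < r" and ball: "ball z r \<subseteq> ball 0 R"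
    and D: "D_part p M R \<le> ennreal q" and q: "0 \<le> q"
  shows "r powr p * (kappa M R * (unit_ball_vol DIM('a) * r ^ DIM('a)))
           \<le> q * vol_ball R TYPE('a) + r powr p * measure M (ball z (2 * r))"
proof -
  define \<alpha> where "\<alpha> = density M (indicator (ball 0 R))"
  define \<beta> where "\<beta> = density lborel (\<lambda>x::'a. ennreal (kappa M R) * indicator (ball 0 R) x)"
  define X where "X = kappa M R * (unit_ball_vol DIM('a) * r ^ DIM('a))"
  have "z \<in> ball 0 R"
    using r by (intro subsetD[OF ball]) simp
  then have R: "0 < R"
    by (simp add: le_less_trans[OF norm_ge_zero])
  have "emeasure \<beta> (ball z r)
          = (\<integral>\<^sup>+ x. ennreal (kappa M R) * indicator (ball 0 R) x * indicator (ball z r) x \<partial>lborel)"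
    unfolding \<beta>_def
    by (rule emeasure_density) (auto intro!: borel_measurable_times_ennreal borel_measurable_indicator)
  also have "\<dots> = (\<integral>\<^sup>+ x. ennreal (kappa M R) * indicator (ball z r) x \<partial>lborel)"
    using ball by (intro nn_integral_cong) (auto split: split_indicator)
  also have "\<dots> = ennreal X"
    using r kappa_nonneg[of M R]
    by (simp add: nn_integral_cmult_indicator emeasure_ball X_def ennreal_mult)
  finally have \<beta>_ball: "emeasure \<beta> (ball z r) = ennreal X" .
  have "emeasure \<alpha> (ball z (2 * r))
          = (\<integral>\<^sup>+ x. indicator (ball 0 R) x * indicator (ball z (2 * r)) x \<partial>M)"
    unfolding \<alpha>_def by (rule emeasure_density) (auto simp: M(1) intro!: borel_measurable_indicator)
  also have "\<dots> \<le> (\<integral>\<^sup>+ x. indicator (ball z (2 * r)) x \<partial>M)"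
    by (intro nn_integral_mono) (auto split: split_indicator)
  also have "\<dots> = ennreal (measure M (ball z (2 * r)))"
    using M by (simp add: finite_measure.emeasure_eq_measure)
  finally have \<alpha>_ball: "emeasure \<alpha> (ball z (2 * r)) \<le> ennreal (measure M (ball z (2 * r)))" .
  have "ennreal (r powr p) * ennreal X \<le> Wpp p \<alpha> \<beta> + ennreal (r powr p) * emeasure \<alpha> (ball z (2 * r))"
    using Wpp_ball_bound[OF p, of r \<beta> z \<alpha>] r \<beta>_ball by simp
  also have "\<dots> \<le> ennreal (q * vol_ball R TYPE('a)) + ennreal (r powr p) * ennreal (measure M (ball z (2 * r)))"
    using Wpp_le_of_D_part[OF D R] \<alpha>_ball unfolding \<alpha>_def \<beta>_def
    by (intro add_mono mult_left_mono) auto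
  finally have "ennreal (r powr p * X)
      \<le> ennreal (q * vol_ball R TYPE('a) + r powr p * measure M (ball z (2 * r)))"
    using q r vol_ball_pos[OF R, where 'a='a] kappa_nonneg[of M R]
    by (simp add: X_def ennreal_mult ennreal_plus)
  then show ?thesis
    using q r vol_ball_pos[OF R, where 'a='a] by (subst (asm) ennreal_le_iff) (auto simp: X_def)
qed

lemma cost_hashset_le:
  fixes c :: "'a::euclidean_space \<Rightarrow> real" and \<pi> :: "('a \<times> 'a) measure"
  assumes "E_fun c \<pi> 4 \<le> ennreal q"
  shows "(\<integral>\<^sup>+ s \<in> hashset 3. ennreal (c (fst s - snd s)) \<partial>\<pi>)
           \<le> ennreal (q * vol_ball 4 TYPE('a))"
proof -
  have "(\<integral>\<^sup>+ s \<in> hashset 3. ennreal (c (fst s - snd s)) \<partial>\<pi>)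
      \<le> (\<integral>\<^sup>+ s \<in> hashset 4. ennreal (c (fst s - snd s)) \<partial>\<pi>)"
    by (intro nn_integral_mono) (auto simp: hashset_def split: split_indicator)
  also have "\<dots> \<le> ennreal (q * vol_ball 4 TYPE('a))"
    using assms unfolding E_fun_def by (rule le_of_divide_ennreal_le) (simp add: vol_ball_pos)
  finally show ?thesis .
qed

lemma emeasure_hashset_le_of_D_part:
  fixes \<pi> :: "('a::euclidean_space \<times> 'a) measure"
  assumes p: "1 < p" and cpl: "\<pi> \<in> couplings lam mu"
    and flam: "finite_measure lam" and fmu: "finite_measure mu"
    and D: "D_part p lam 4 \<le> 1" "D_part p mu 4 \<le> 1"
  shows "emeasure \<pi> (hashset 3) \<le> ennreal (4 * vol_ball 4 TYPE('a))"
proof -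
  have "emeasure M (ball 0 3) \<le> ennreal (2 * vol_ball 4 TYPE('a))"
    if M: "finite_measure M" "sets M = sets borel" "D_part p M 4 \<le> 1" for M :: "'a measure"
  proof -
    have "emeasure M (ball 0 3) \<le> emeasure M (ball 0 4)"
      using M(2) by (intro emeasure_mono) auto
    also have "\<dots> = ennreal (kappa M 4 * vol_ball 4 TYPE('a))"
      using M(1) vol_ball_pos[of 4, where 'a='a]
      by (simp add: kappa_def finite_measure.emeasure_eq_measure)
    also have "\<dots> \<le> ennreal (2 * vol_ball 4 TYPE('a))"
      using kappa_bounds_of_D_part(2)[OF p _ M(3)] vol_ball_pos[of 4, where 'a='a]
      by (intro ennreal_leI mult_right_mono) auto
    finally show ?thesis .
  qed
  then have "emeasure lam (ball 0 3) + emeasure mu (ball 0 3)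
      \<le> ennreal (2 * vol_ball 4 TYPE('a)) + ennreal (2 * vol_ball 4 TYPE('a))"
    using flam fmu couplings_marginal_sets[OF cpl] D by (intro add_mono) auto
  also have "\<dots> = ennreal (4 * vol_ball 4 TYPE('a))"
    using vol_ball_pos[of 4, where 'a='a] by (simp flip: ennreal_plus)
  finally show ?thesis
    using emeasure_hashset_le[OF cpl, of 3] by (rule order_trans[rotated])
qed

section \<open>The cost function\<close>

lemma cost_assms_lower: "cost_assms p \<Lambda> c \<Longrightarrow> (1 / \<Lambda>) * norm u powr p \<le> c u"
  unfolding cost_assms_def by blast

lemma cost_assms_zero:
  fixes c :: "'a::euclidean_space \<Rightarrow> real"
  assumes "cost_assms p \<Lambda> c"
  shows "c 0 = 0"
proof -
  have "(1 / \<Lambda>) * norm (0::'a) powr p \<le> c 0" "c 0 \<le> \<Lambda> * norm (0::'a) powr p"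
    using assms unfolding cost_assms_def by blast+
  then show "c 0 = 0"
    by simp
qed

lemma cost_assms_nonneg: "cost_assms p \<Lambda> c \<Longrightarrow> 0 \<le> \<Lambda> \<Longrightarrow> 0 \<le> c u"
  using cost_assms_lower[of p \<Lambda> c u] by (smt (verit) divide_nonneg_nonneg mult_nonneg_nonneg powr_ge_zero)

lemma cost_assms_continuous: "cost_assms p \<Lambda> c \<Longrightarrow> continuous_on UNIV c"
proof -
  assume "cost_assms p \<Lambda> c"
  then obtain grad where "\<And>x. (c has_derivative (\<lambda>h. grad x \<bullet> h)) (at x)"
    unfolding cost_assms_def by blast
  then show ?thesis
    by (intro continuous_at_imp_continuous_on ballI has_derivative_continuous)
qed

lemma cost_assms_local_lipschitz:
  assumes "cost_assms p \<Lambda> c" "1 \<le> p" "0 \<le> \<Lambda>" "norm a + norm b \<le> K"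
  shows "c a \<le> c b + \<Lambda> * K powr (p - 1) * norm (a - b)"
proof -
  have "c a - c b \<le> \<Lambda> * (norm a + norm b) powr (p - 1) * norm (a - b)"
    using assms(1) unfolding cost_assms_def by (metis abs_le_D1)
  also have "\<dots> \<le> \<Lambda> * K powr (p - 1) * norm (a - b)"
    using assms(2-4) by (intro mult_right_mono mult_left_mono powr_mono2) auto
  finally show ?thesis
    by simp
qed

lemma cost_assms_uminus:
  assumes "cost_assms p \<Lambda> c"
  shows "cost_assms p \<Lambda> (\<lambda>u. c (- u))"
proof -
  obtain grad where d: "\<And>x. (c has_derivative (\<lambda>h. grad x \<bullet> h)) (at x)"
    and g: "continuous_on UNIV grad"
    and gl: "\<And>x y. norm (grad x - grad y) \<le> \<Lambda> * (norm x + norm y) powr (p - 2) * norm (x - y)"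
    using assms unfolding cost_assms_def by blast
  have "((\<lambda>u. c (- u)) has_derivative (\<lambda>h. (- grad (- x)) \<bullet> h)) (at x)" for x
  proof -
    have "((\<lambda>u. c (- u)) has_derivative (\<lambda>h. grad (- x) \<bullet> (- h))) (at x)"
      using has_derivative_compose[OF has_derivative_minus[OF has_derivative_ident] d] by simp
    then show ?thesis
      by simp
  qed
  moreover have "continuous_on UNIV (\<lambda>x. - grad (- x))"
    by (intro continuous_on_minus continuous_on_compose2[OF g]) (auto intro: continuous_intros)
  moreover have "norm (- grad (- x) - - grad (- y)) \<le> \<Lambda> * (norm x + norm y) powr (p - 2) * norm (x - y)" for x y
    using gl[of "- x" "- y"] by (simp add: norm_minus_commute)
  ultimately have "\<exists>grad. (\<forall>x. ((\<lambda>u. c (- u)) has_derivative (\<lambda>h. grad x \<bullet> h)) (at x))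
      \<and> continuous_on UNIV grad
      \<and> (\<forall>x y. norm (grad x - grad y) \<le> \<Lambda> * (norm x + norm y) powr (p - 2) * norm (x - y))"
    by (intro exI[of _ "\<lambda>x. - grad (- x)"]) blast
  moreover have "(1 / \<Lambda>) * s * (1 - s) * ((norm x ^ 2 + norm y ^ 2) powr ((p - 2) / 2) * norm (x - y) ^ 2)
      + c (- (s *\<^sub>R x + (1 - s) *\<^sub>R y)) \<le> s * c (- x) + (1 - s) * c (- y)"
    if "s \<in> {0..1}" for x y :: 'a and s
  proof -
    have "\<forall>x y. \<forall>s\<in>{0..1::real}.
        (1 / \<Lambda>) * s * (1 - s) * ((norm x ^ 2 + norm y ^ 2) powr ((p - 2) / 2) * norm (x - y) ^ 2)
          + c (s *\<^sub>R x + (1 - s) *\<^sub>R y) \<le> s * c x + (1 - s) * c y"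
      using assms unfolding cost_assms_def by blast
    from this[rule_format, of s "- x" "- y"] that show ?thesis
      by (simp add: norm_minus_commute)
  qed
  moreover have "\<bar>c (- x) - c (- y)\<bar> \<le> \<Lambda> * (norm x + norm y) powr (p - 1) * norm (x - y)" for x y :: 'a
  proof -
    have "\<forall>x y. \<bar>c x - c y\<bar> \<le> \<Lambda> * (norm x + norm y) powr (p - 1) * norm (x - y)"
      using assms unfolding cost_assms_def by blast
    from this[rule_format, of "- x" "- y"] show ?thesis
      by (simp add: norm_minus_commute)
  qed
  moreover have "(1 / \<Lambda>) * norm x powr p \<le> c (- x) \<and> c (- x) \<le> \<Lambda> * norm x powr p" for x :: 'a
  proof -
    have "\<forall>x. (1 / \<Lambda>) * norm x powr p \<le> c x \<and> c x \<le> \<Lambda> * norm x powr p"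
      using assms unfolding cost_assms_def by blast
    from this[rule_format, of "- x"] show ?thesis
      by simp
  qed
  ultimately show ?thesis
    unfolding cost_assms_def by blast
qed

lemma cost_assms_split_ray:
  fixes c :: "'a::euclidean_space \<Rightarrow> real"
  assumes c: "cost_assms p \<Lambda> c" and s: "0 \<le> s" "s \<le> 1"
  shows "c (s *\<^sub>R a) + c ((1 - s) *\<^sub>R a) + 2 / \<Lambda> * s * (1 - s) * norm a powr p \<le> c a"
proof -
  have conv: "\<forall>x y. \<forall>s\<in>{0..1::real}.
      (1 / \<Lambda>) * s * (1 - s) * ((norm x ^ 2 + norm y ^ 2) powr ((p - 2) / 2) * norm (x - y) ^ 2)
        + c (s *\<^sub>R x + (1 - s) *\<^sub>R y) \<le> s * c x + (1 - s) * c y"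
    using c unfolding cost_assms_def by blast
  have "(norm a ^ 2 + norm (0::'a) ^ 2) powr ((p - 2) / 2) * norm (a - 0) ^ 2
      = (norm a powr 2) powr ((p - 2) / 2) * norm a powr 2"
    by simp
  also have "\<dots> = norm a powr p"
  proof -
    have "2 * ((p - 2) / 2) + 2 = p"
      by (simp add: field_simps)
    then show ?thesis
      unfolding powr_powr powr_add[symmetric] by simp
  qed
  finally have pw: "(norm a ^ 2 + norm (0::'a) ^ 2) powr ((p - 2) / 2) * norm (a - 0) ^ 2 = norm a powr p" .
  have ray: "(1 / \<Lambda>) * t * (1 - t) * norm a powr p + c (t *\<^sub>R a) \<le> t * c a"
    if "0 \<le> t" "t \<le> 1" for t
    using conv[rule_format, of t a 0] that cost_assms_zero[OF c] unfolding pw by simp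
  define X where "X = (1 / \<Lambda>) * s * (1 - s) * norm a powr p"
  from ray[of s] ray[of "1 - s"] s
  have halves: "X + c (s *\<^sub>R a) \<le> s * c a" "X + c ((1 - s) *\<^sub>R a) \<le> (1 - s) * c a"
    unfolding X_def by (simp_all add: mult.commute mult.left_commute)
  have "c (s *\<^sub>R a) + c ((1 - s) *\<^sub>R a) + 2 / \<Lambda> * s * (1 - s) * norm a powr p
      = (X + c (s *\<^sub>R a)) + (X + c ((1 - s) *\<^sub>R a))"
    unfolding X_def by (simp add: algebra_simps)
  also have "\<dots> \<le> s * c a + (1 - s) * c a"
    using halves by (rule add_mono)
  also have "\<dots> = c a"
    by (simp add: algebra_simps)
  finally show ?thesis .
qed

section \<open>Repulsion of transport rays\<close>

lemma cyclically_monotone_pair: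
  assumes "c_cyclically_monotone c S" "(x, y) \<in> S" "(x', y') \<in> S"
  shows "c (x - y) + c (x' - y') \<le> c (x - y') + c (x' - y)"
proof -
  define xs where "xs = (\<lambda>i::nat. if i = 0 then x else x')"
  define ys where "ys = (\<lambda>i::nat. if i = 0 then y else y')"
  have "\<forall>i<2. (xs i, ys i) \<in> S"
    using assms(2,3) unfolding xs_def ys_def by (auto simp: less_2_cases_iff)
  then have "(\<Sum>i<2. c (xs i - ys i)) \<le> (\<Sum>i<2. c (xs i - ys ((i + 1) mod 2)))"
    using assms(1) unfolding c_cyclically_monotone_def by (metis one_le_numeral)
  then show ?thesis
    unfolding xs_def ys_def by (simp add: numeral_2_eq_2)
qed

definition sep_ratio :: "real \<Rightarrow> real \<Rightarrow> real" where
  "sep_ratio p \<Lambda> = 1 / (\<Lambda>\<^sup>2 * 2 powr (p + 2))"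

lemma sep_ratio_pos: "0 < \<Lambda> \<Longrightarrow> 0 < sep_ratio p \<Lambda>"
  unfolding sep_ratio_def by simp

lemma sep_ratio_le: "1 \<le> \<Lambda> \<Longrightarrow> 1 \<le> p \<Longrightarrow> sep_ratio p \<Lambda> \<le> 1 / 8"
proof -
  assume "1 \<le> \<Lambda>" "1 \<le> p"
  then have "1 * 2 powr 3 \<le> \<Lambda>\<^sup>2 * 2 powr (p + 2)"
    by (intro mult_mono powr_mono) (auto simp: one_le_power)
  then show ?thesis
    unfolding sep_ratio_def by (simp add: field_simps)
qed

lemma sep_ratio_gain_exceeds_loss:
  assumes La: "1 \<le> \<Lambda>" and m: "0 < m" and L: "0 < L" and s: "0 < s" "s \<le> 1 / 2"
    and s_def: "s = m / (2 * L)"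
  shows "3 * (\<Lambda> * (2 * L) powr (p - 1) * (sep_ratio p \<Lambda> * m)) < 2 / \<Lambda> * s * (1 - s) * L powr p"
proof -
  define P where "P = m * L powr (p - 1) / \<Lambda>"
  have P: "0 < P"
    using m L La by (simp add: P_def)
  have gain: "2 / \<Lambda> * s * (1 - s) * L powr p = (1 - s) * P"
  proof -
    have "L powr p = L * L powr (p - 1)"
      using L by (simp add: powr_mult_base)
    then show ?thesis
      using L La unfolding s_def P_def by (simp add: field_simps)
  qed
  have loss: "\<Lambda> * (2 * L) powr (p - 1) * (sep_ratio p \<Lambda> * m) = P / 8"
  proof -
    have "2 powr (p + 2) = 2 powr (p - 1) * 8"
      using powr_add[of 2 "p - 1" 3] by (simp add: add.commute)
    then show ?thesis
      using L La unfolding P_def sep_ratio_def by (simp add: powr_mult field_simps power2_eq_square)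
  qed
  have "3 * (P / 8) < (1 / 2) * P"
    using P by simp
  also have "\<dots> \<le> (1 - s) * P"
    using s P by (intro mult_right_mono) auto
  finally show ?thesis
    unfolding gain loss .
qed

text \<open>Exchanging the partners of \<open>(x, y)\<close> and \<open>(x', y')\<close> splits \<open>x - y\<close> at \<open>z\<close>, which by
  uniform convexity saves about \<open>m |x - y|\<^bsup>p-1\<^esup> / \<Lambda>\<close>, while moving the endpoints by at
  most \<open>\<eta> m\<close> costs at most \<open>3 \<Lambda> (2|x - y|)\<^bsup>p-1\<^esup> \<eta> m\<close>; \<open>sep_ratio\<close> makes the latter smaller.\<close>

lemma monotone_pair_repulsion:
  fixes f :: "'a::euclidean_space \<Rightarrow> real"
  assumes f: "cost_assms p \<Lambda> f" and p: "1 < p" and La: "1 \<le> \<Lambda>"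
    and mono: "f (x - y) + f (x' - y') \<le> f (x - y') + f (x' - y)"
    and m: "0 < m" "m \<le> norm (x - y)"
    and near: "dist x' (x + (m / (2 * norm (x - y))) *\<^sub>R (y - x)) < sep_ratio p \<Lambda> * m"
  shows "sep_ratio p \<Lambda> * m < norm (x' - y')"
proof (rule ccontr)
  assume "\<not> sep_ratio p \<Lambda> * m < norm (x' - y')"
  have p1: "1 \<le> p" and La0: "0 \<le> \<Lambda>"
    using p La by simp_all
  define \<eta> L where "\<eta> = sep_ratio p \<Lambda>" and "L = norm (x - y)"
  define s a where "s = m / (2 * L)" and "a = x - y"
  define v w where "v = x' - (x + s *\<^sub>R (y - x))" and "w = y' - x'"
  define D where "D = \<Lambda> * (2 * L) powr (p - 1) * (\<eta> * m)"
  have L: "0 < L" "m \<le> L"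
    using m unfolding L_def by auto
  have s: "0 < s" "s \<le> 1 / 2"
    using L m unfolding s_def by (auto simp: field_simps)
  have \<eta>: "0 < \<eta>" "\<eta> \<le> 1 / 8"
    using sep_ratio_pos[of \<Lambda> p] sep_ratio_le[OF La] p La unfolding \<eta>_def by auto
  have \<eta>m: "0 < \<eta> * m" "\<eta> * m \<le> m / 8"
    using mult_right_mono[OF \<eta>(2), of m] \<eta> m by auto
  have v: "norm v < \<eta> * m"
    using near unfolding v_def s_def L_def \<eta>_def by (simp add: dist_norm)
  have w: "norm w \<le> \<eta> * m"
    using \<open>\<not> sep_ratio p \<Lambda> * m < norm (x' - y')\<close> unfolding w_def \<eta>_def by (simp add: norm_minus_commute)
  have na: "norm a = L" and sL: "s * L = m / 2"
    using L unfolding a_def L_def s_def by simp_all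
  have sa: "norm (s *\<^sub>R a) = m / 2"
    using s sL by (simp add: na)
  have "\<bar>1 - s\<bar> = 1 - s"
    using s by simp
  then have s'a: "norm ((1 - s) *\<^sub>R a) = L - m / 2"
    using sL by (simp add: na left_diff_distrib)
  have xy': "x - y' = s *\<^sub>R a - v - w" and x'y: "x' - y = (1 - s) *\<^sub>R a + v"
    unfolding a_def v_def w_def by (simp_all add: algebra_simps)
  have lip1: "f (s *\<^sub>R a - v - w) \<le> f (s *\<^sub>R a) + 2 * D"
  proof -
    have "norm (s *\<^sub>R a - v - w) \<le> norm (s *\<^sub>R a) + norm v + norm w"
      by (metis norm_triangle_ineq4 add_right_mono order_trans)
    then have "norm (s *\<^sub>R a - v - w) + norm (s *\<^sub>R a) \<le> 2 * L"
      using sa v w L \<eta>m by linarith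
    have "norm (s *\<^sub>R a - v - w - s *\<^sub>R a) = norm (v + w)"
      using norm_minus_cancel[of "v + w"] by (simp add: algebra_simps)
    with cost_assms_local_lipschitz[OF f p1 La0 \<open>norm (s *\<^sub>R a - v - w) + norm (s *\<^sub>R a) \<le> 2 * L\<close>]
    have "f (s *\<^sub>R a - v - w) \<le> f (s *\<^sub>R a) + \<Lambda> * (2 * L) powr (p - 1) * norm (v + w)"
      by simp
    also have "\<dots> \<le> f (s *\<^sub>R a) + \<Lambda> * (2 * L) powr (p - 1) * (2 * (\<eta> * m))"
      using norm_triangle_ineq[of v w] v w La by (intro add_left_mono mult_left_mono) auto
    finally show ?thesis
      by (simp add: D_def)
  qed
  have lip2: "f ((1 - s) *\<^sub>R a + v) \<le> f ((1 - s) *\<^sub>R a) + D"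
  proof -
    have "norm ((1 - s) *\<^sub>R a + v) + norm ((1 - s) *\<^sub>R a) \<le> 2 * L"
      using norm_triangle_ineq[of "(1 - s) *\<^sub>R a" v] s'a v \<eta>m by linarith
    from cost_assms_local_lipschitz[OF f p1 La0 this]
    have "f ((1 - s) *\<^sub>R a + v) \<le> f ((1 - s) *\<^sub>R a) + \<Lambda> * (2 * L) powr (p - 1) * norm v"
      by simp
    also have "\<dots> \<le> f ((1 - s) *\<^sub>R a) + D"
      using v La unfolding D_def by (intro add_left_mono mult_left_mono) auto
    finally show ?thesis .
  qed
  have split: "f (s *\<^sub>R a) + f ((1 - s) *\<^sub>R a) + 2 / \<Lambda> * s * (1 - s) * L powr p \<le> f a"
    using cost_assms_split_ray[OF f, of s a] s unfolding a_def L_def by simp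
  have "0 \<le> f (x' - y')"
    using cost_assms_nonneg[OF f] La by simp
  then have "2 / \<Lambda> * s * (1 - s) * L powr p \<le> 3 * D"
    using mono split lip1 lip2 unfolding xy' x'y a_def[symmetric] by linarith
  moreover have "3 * D < 2 / \<Lambda> * s * (1 - s) * L powr p"
    unfolding D_def \<eta>_def using sep_ratio_gain_exceeds_loss[OF La m(1) L(1) s s_def] .
  ultimately show False
    by linarith
qed

section \<open>Displacement bound on the support\<close>

text \<open>The \<open>M\<close>-mass of \<open>B\<^sub>\<rho>(z)\<close> travels farther than \<open>\<rho>\<close>, so its cost is controlled by \<open>E\<close>,
  while the Wasserstein part of \<open>D\<close> bounds that mass from below by a multiple of \<open>\<rho>\<^sup>d\<close>.\<close>

lemma displacement_bound_one_side:
  fixes \<pi> :: "('a::euclidean_space \<times> 'a) measure" and M :: "'a measure"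
  assumes p: "1 < p" and La: "1 \<le> \<Lambda>" and c: "cost_assms p \<Lambda> c"
    and cpl: "\<pi> \<in> couplings lam mu"
    and P: "P = fst \<and> M = lam \<or> P = snd \<and> M = mu"
    and fin: "finite_measure M"
    and E: "E_fun c \<pi> 4 \<le> ennreal q" and D: "D_part p M 4 \<le> ennreal q" and q: "0 \<le> q" "q \<le> 1"
    and \<rho>: "0 < \<rho>" "ball z \<rho> \<subseteq> ball 0 4"
    and far: "\<forall>s\<in>msupp \<pi>. P s \<in> ball z \<rho> \<longrightarrow> \<rho> < norm (fst s - snd s)"
  shows "(\<rho> / 2) powr (p + DIM('a)) \<le> 4 ^ (DIM('a) + 1) * \<Lambda> * q"
proof -
  define V \<omega> \<mu>B where "V = vol_ball 4 TYPE('a)" and "\<omega> = unit_ball_vol DIM('a)"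
    and "\<mu>B = measure M (ball z \<rho>)"
  have V: "V = \<omega> * 4 ^ DIM('a)" and \<omega>: "0 < \<omega>" and \<mu>B: "0 \<le> \<mu>B"
    by (simp_all add: V_def \<omega>_def \<mu>B_def vol_ball_eq)
  have sets_M: "sets M = sets borel"
    using P couplings_marginal_sets[OF cpl] by auto
  have P_ball: "P -` ball z \<rho> \<in> sets \<pi>" "emeasure \<pi> (P -` ball z \<rho>) = ennreal \<mu>B"
    using P emeasure_couplings_vimage[OF cpl, of "ball z \<rho>"] fin
    by (auto simp: couplings_sets(1)[OF cpl] borel_open open_vimage_fst open_vimage_snd
      \<mu>B_def finite_measure.emeasure_eq_measure)
  have "ennreal ((1 / \<Lambda>) * \<rho> powr p) * ennreal \<mu>B
      = (\<integral>\<^sup>+ s. ennreal ((1 / \<Lambda>) * \<rho> powr p) * indicator (P -` ball z \<rho>) s \<partial>\<pi>)"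
    using P_ball by (simp add: nn_integral_cmult_indicator)
  also have "\<dots> \<le> (\<integral>\<^sup>+ s \<in> hashset 4. ennreal (c (fst s - snd s)) \<partial>\<pi>)"
  proof (rule nn_integral_mono_AE)
    show "AE s in \<pi>. ennreal ((1 / \<Lambda>) * \<rho> powr p) * indicator (P -` ball z \<rho>) s
                    \<le> ennreal (c (fst s - snd s)) * indicator (hashset 4) s"
      using AE_in_msupp[OF couplings_sets(1)[OF cpl]]
    proof eventually_elim
      case (elim s)
      show ?case
      proof (cases "P s \<in> ball z \<rho>")
        case True
        then have "s \<in> hashset 4"
          using P \<rho>(2) by (auto simp: hashset_def)
        have "(1 / \<Lambda>) * \<rho> powr p \<le> (1 / \<Lambda>) * norm (fst s - snd s) powr p"
          using far elim True La p \<rho>(1) by (intro mult_left_mono powr_mono2) auto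
        also have "\<dots> \<le> c (fst s - snd s)"
          by (rule cost_assms_lower[OF c])
        finally show ?thesis
          using True \<open>s \<in> hashset 4\<close> by (simp add: ennreal_leI)
      qed simp
    qed
  qed
  also have "\<dots> \<le> ennreal (q * V)"
    using E unfolding E_fun_def V_def by (rule le_of_divide_ennreal_le) (simp add: vol_ball_pos)
  finally have "ennreal ((1 / \<Lambda>) * \<rho> powr p * \<mu>B) \<le> ennreal (q * V)"
    by (simp only: ennreal_mult''[OF \<mu>B])
  then have cost: "\<rho> powr p * \<mu>B \<le> \<Lambda> * (q * V)"
    using q La V \<omega> by (simp add: ennreal_le_iff field_simps)
  have "D_part p M 4 \<le> 1"
    using D q(2) by (simp add: order_trans ennreal_le_1)
  then have \<kappa>: "1 / 2 \<le> kappa M 4"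
    by (intro kappa_bounds_of_D_part(1)[OF p]) simp_all
  have "ball z (\<rho> / 2) \<subseteq> ball 0 4"
    using \<rho> by (auto intro: order_trans[rotated, OF subset_ball])
  from D_part_ball_bound[OF sets_M fin _ _ this D q(1)] p \<rho>(1)
  have W: "(\<rho> / 2) powr p * (kappa M 4 * (\<omega> * (\<rho> / 2) ^ DIM('a))) \<le> q * V + (\<rho> / 2) powr p * \<mu>B"
    by (simp add: V_def \<omega>_def \<mu>B_def)
  have "(\<rho> / 2) powr p * \<mu>B \<le> \<rho> powr p * \<mu>B"
    using \<rho>(1) p \<mu>B by (intro mult_right_mono powr_mono2) auto
  moreover have "(\<rho> / 2) powr p * ((1 / 2) * (\<omega> * (\<rho> / 2) ^ DIM('a)))
      \<le> (\<rho> / 2) powr p * (kappa M 4 * (\<omega> * (\<rho> / 2) ^ DIM('a)))"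
    using \<kappa> \<omega> \<rho>(1) by (intro mult_left_mono mult_right_mono) auto
  moreover have "q * V \<le> \<Lambda> * (q * V)"
    using mult_right_mono[OF La, of "q * V"] q V \<omega> by simp
  ultimately have "(\<rho> / 2) powr p * (\<rho> / 2) ^ DIM('a) * \<omega> \<le> 4 * \<Lambda> * q * 4 ^ DIM('a) * \<omega>"
    using W cost unfolding V by (simp add: algebra_simps)
  then have "(\<rho> / 2) powr p * (\<rho> / 2) ^ DIM('a) \<le> 4 ^ (DIM('a) + 1) * \<Lambda> * q"
    using \<omega> by (simp add: algebra_simps)
  then show ?thesis
    using \<rho>(1) by (simp add: powr_add powr_realpow)
qed

lemma support_displacement_bound:
  fixes \<pi> :: "('a::euclidean_space \<times> 'a) measure"
  assumes p: "1 < p" and La: "1 \<le> \<Lambda>" and c: "cost_assms p \<Lambda> c"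
    and cpl: "\<pi> \<in> couplings lam mu" and flam: "finite_measure lam" and fmu: "finite_measure mu"
    and cyc: "c_cyclically_monotone c (msupp \<pi>)"
    and Q: "E_fun c \<pi> 4 + D_fun p lam mu 4 \<le> ennreal q" and q: "0 \<le> q" "q \<le> 1"
    and s: "s \<in> msupp \<pi>" "s \<in> hashset 3"
  shows "(sep_ratio p \<Lambda> * min (norm (fst s - snd s)) 1 / 2) powr (p + DIM('a))
           \<le> 4 ^ (DIM('a) + 1) * \<Lambda> * q"
proof -
  obtain x y where xy: "s = (x, y)"
    by fastforce
  define \<eta> L where "\<eta> = sep_ratio p \<Lambda>" and "L = norm (x - y)"
  define m where "m = min L 1"
  note E = E_fun_D_fun_le_parts(1)[OF Q] and Dl = E_fun_D_fun_le_parts(2)[OF Q]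
    and Dm = E_fun_D_fun_le_parts(3)[OF Q]
  show ?thesis
  proof (cases "m = 0")
    case True
    then have "min (norm (fst s - snd s)) 1 = 0"
      by (simp add: xy m_def L_def)
    then show ?thesis
      using q La by simp
  next
    case False
    then have m: "0 < m" "m \<le> 1" "m \<le> L"
      by (auto simp: m_def L_def)
    have "0 < \<eta>" "\<eta> \<le> 1 / 8"
      using sep_ratio_pos[of \<Lambda> p] sep_ratio_le[OF La] p La unfolding \<eta>_def by auto
    then have \<rho>: "0 < \<eta> * m" "\<eta> * m \<le> 1 / 8"
      using m mult_mono[of \<eta> "1 / 8" m 1] by auto
    have centre: "ball (u + (m / (2 * norm (u - v))) *\<^sub>R (v - u)) (\<eta> * m) \<subseteq> ball 0 4"
      if "u \<in> ball 0 3" "norm (u - v) = L" for u v :: 'a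
    proof -
      have "norm ((m / (2 * L)) *\<^sub>R (v - u)) = m / 2"
        using m that(2) by (simp add: norm_minus_commute)
      then have "norm (u + (m / (2 * L)) *\<^sub>R (v - u)) \<le> norm u + m / 2"
        using norm_triangle_ineq[of u "(m / (2 * L)) *\<^sub>R (v - u)"] by simp
      then show ?thesis
        using that m \<rho> by (simp add: ball_subset_ball_iff dist_norm)
    qed
    have "x \<in> ball 0 3 \<or> y \<in> ball 0 3"
      using s(2) by (simp add: xy hashset_def)
    then show ?thesis
    proof
      assume x: "x \<in> ball 0 3"
      define z where "z = x + (m / (2 * norm (x - y))) *\<^sub>R (y - x)"
      have far: "\<forall>s'\<in>msupp \<pi>. fst s' \<in> ball z (\<eta> * m) \<longrightarrow> \<eta> * m < norm (fst s' - snd s')"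
      proof (intro ballI impI)
        fix s' assume s': "s' \<in> msupp \<pi>" "fst s' \<in> ball z (\<eta> * m)"
        have "c (x - y) + c (fst s' - snd s') \<le> c (x - snd s') + c (fst s' - y)"
          using cyclically_monotone_pair[OF cyc, of x y "fst s'" "snd s'"] s(1) s'(1) by (simp add: xy)
        from monotone_pair_repulsion[OF c p La this m(1)] show "\<eta> * m < norm (fst s' - snd s')"
          using m(3) s'(2) by (simp add: \<eta>_def L_def z_def dist_commute)
      qed
      have "ball z (\<eta> * m) \<subseteq> ball 0 4"
        unfolding z_def by (rule centre[OF x L_def[symmetric]])
      from displacement_bound_one_side[OF p La c cpl disjI1[OF conjI[OF refl refl]] flam E Dl q \<rho>(1) this far]
      show ?thesis
        by (simp add: xy \<eta>_def m_def L_def)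
    next
      \<comment> \<open>apply the repulsion to the reflected cost \<open>c (- u)\<close> and the swapped pairs\<close>
      assume y: "y \<in> ball 0 3"
      define z where "z = y + (m / (2 * norm (y - x))) *\<^sub>R (x - y)"
      have far: "\<forall>s'\<in>msupp \<pi>. snd s' \<in> ball z (\<eta> * m) \<longrightarrow> \<eta> * m < norm (fst s' - snd s')"
      proof (intro ballI impI)
        fix s' assume s': "s' \<in> msupp \<pi>" "snd s' \<in> ball z (\<eta> * m)"
        have "c (x - y) + c (fst s' - snd s') \<le> c (x - snd s') + c (fst s' - y)"
          using cyclically_monotone_pair[OF cyc, of x y "fst s'" "snd s'"] s(1) s'(1) by (simp add: xy)
        then have "c (- (y - x)) + c (- (snd s' - fst s')) \<le> c (- (y - fst s')) + c (- (snd s' - x))"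
          by (simp add: add.commute)
        from monotone_pair_repulsion[OF cost_assms_uminus[OF c] p La this m(1)]
        have "\<eta> * m < norm (snd s' - fst s')"
          using m(3) s'(2) by (simp add: \<eta>_def L_def z_def dist_commute norm_minus_commute)
        then show "\<eta> * m < norm (fst s' - snd s')"
          by (simp add: norm_minus_commute)
      qed
      have "norm (y - x) = L"
        by (simp add: L_def norm_minus_commute)
      then have "ball z (\<eta> * m) \<subseteq> ball 0 4"
        unfolding z_def by (rule centre[OF y])
      from displacement_bound_one_side[OF p La c cpl disjI2[OF conjI[OF refl refl]] fmu E Dm q \<rho>(1) this far]
      show ?thesis
        by (simp add: xy \<eta>_def m_def L_def)
    qed
  qed
qed

definition displacement_const :: "real \<Rightarrow> real \<Rightarrow> nat \<Rightarrow> real" where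
  "displacement_const p \<Lambda> d = 4 ^ (d + 1) * \<Lambda> * (2 / sep_ratio p \<Lambda>) powr (p + d)"

lemma displacement_const_pos: "0 < \<Lambda> \<Longrightarrow> 0 < displacement_const p \<Lambda> d"
  using sep_ratio_pos[of \<Lambda> p] by (simp add: displacement_const_def)

lemma support_displacement_le:
  fixes \<pi> :: "('a::euclidean_space \<times> 'a) measure"
  assumes p: "1 < p" and La: "1 \<le> \<Lambda>" and c: "cost_assms p \<Lambda> c"
    and cpl: "\<pi> \<in> couplings lam mu" and flam: "finite_measure lam" and fmu: "finite_measure mu"
    and cyc: "c_cyclically_monotone c (msupp \<pi>)"
    and Q: "E_fun c \<pi> 4 + D_fun p lam mu 4 \<le> ennreal q" and q: "0 \<le> q" "q \<le> 1"
    and small: "2 * displacement_const p \<Lambda> DIM('a) * q \<le> 1"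
    and s: "s \<in> msupp \<pi>" "s \<in> hashset 3"
  shows "norm (fst s - snd s) \<le> (displacement_const p \<Lambda> DIM('a) * q) powr (1 / (p + DIM('a)))"
proof -
  define \<eta> L N K where "\<eta> = sep_ratio p \<Lambda>" and "L = norm (fst s - snd s)"
    and "N = p + DIM('a)" and "K = displacement_const p \<Lambda> DIM('a)"
  define m where "m = min L 1"
  have N: "0 < N" and \<eta>: "0 < \<eta>" and m: "0 \<le> m" and L: "0 \<le> L"
    using p La sep_ratio_pos[of \<Lambda> p] by (simp_all add: N_def \<eta>_def m_def L_def)
  have bound: "(\<eta> / 2) powr N * m powr N \<le> 4 ^ (DIM('a) + 1) * \<Lambda> * q"
    using support_displacement_bound[OF p La c cpl flam fmu cyc Q q s] \<eta> m
    by (simp add: \<eta>_def m_def L_def N_def powr_mult[symmetric])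
  have "m powr N = (2 / \<eta>) powr N * ((\<eta> / 2) powr N * m powr N)"
    using \<eta> by (simp add: powr_mult[symmetric])
  also have "\<dots> \<le> (2 / \<eta>) powr N * (4 ^ (DIM('a) + 1) * \<Lambda> * q)"
    using bound by (rule mult_left_mono) simp
  also have "\<dots> = K * q"
    by (simp add: K_def displacement_const_def \<eta>_def N_def mult_ac)
  finally have mN: "m powr N \<le> K * q" .
  have "m < 1"
  proof (rule ccontr)
    assume "\<not> m < 1"
    then have "m = 1"
      by (simp add: m_def)
    then show False
      using mN small by (simp add: K_def)
  qed
  then have "L powr N \<le> K * q"
    using mN by (simp add: m_def)
  then have "(L powr N) powr (1 / N) \<le> (K * q) powr (1 / N)"
    using N L by (intro powr_mono2) auto
  then show ?thesis
    using N L by (simp add: powr_powr L_def N_def K_def)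
qed

section \<open>Integration over the radius\<close>

lemma segment_sphere_norm_close:
  fixes x y :: "'a::real_normed_vector"
  assumes "t \<in> {0..1}" "t *\<^sub>R x + (1 - t) *\<^sub>R y \<in> sphere 0 R"
  shows "\<bar>norm x - R\<bar> \<le> norm (x - y)"
proof -
  have "t *\<^sub>R x + (1 - t) *\<^sub>R y - x = (1 - t) *\<^sub>R (y - x)"
    by (simp add: algebra_simps)
  then have "norm (t *\<^sub>R x + (1 - t) *\<^sub>R y - x) \<le> norm (x - y)"
    using assms(1) by (simp add: norm_minus_commute mult_left_le_one_le)
  moreover have "\<bar>norm (t *\<^sub>R x + (1 - t) *\<^sub>R y) - norm x\<bar> \<le> norm (t *\<^sub>R x + (1 - t) *\<^sub>R y - x)"
    by (rule norm_triangle_ineq3)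
  ultimately show ?thesis
    using assms(2) by simp
qed

lemma nn_integral_shell_indicator:
  fixes M :: "'b measure" and g :: "'b \<Rightarrow> real" and h :: "'b \<Rightarrow> ennreal"
  assumes M: "sigma_finite_measure M" and g: "g \<in> borel_measurable M" and h: "h \<in> borel_measurable M"
    and \<delta>: "0 \<le> \<delta>"
  shows "(\<integral>\<^sup>+ R. (\<integral>\<^sup>+ s. h s * indicator {s. \<bar>g s - R\<bar> \<le> \<delta>} s \<partial>M) \<partial>lborel)
           = ennreal (2 * \<delta>) * (\<integral>\<^sup>+ s. h s \<partial>M)"
proof -
  interpret pair_sigma_finite lborel M
    using M by (simp add: pair_sigma_finite_def sigma_finite_lborel)
  define f where "f = (\<lambda>z::real \<times> 'b. h (snd z) * indicator {z. \<bar>g (snd z) - fst z\<bar> \<le> \<delta>} z)"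
  have [measurable]: "(\<lambda>z. g (snd z)) \<in> borel_measurable (lborel \<Otimes>\<^sub>M M)"
    "(\<lambda>z. h (snd z)) \<in> borel_measurable (lborel \<Otimes>\<^sub>M M)"
    "(\<lambda>z. fst z) \<in> borel_measurable (lborel \<Otimes>\<^sub>M M)"
    using measurable_compose[OF measurable_snd g] measurable_compose[OF measurable_snd h]
      measurable_fst[of lborel M] by simp_all
  have "f \<in> borel_measurable (lborel \<Otimes>\<^sub>M M)"
    unfolding f_def by measurable
  then have "(\<integral>\<^sup>+ R. (\<integral>\<^sup>+ s. f (R, s) \<partial>M) \<partial>lborel) = (\<integral>\<^sup>+ s. (\<integral>\<^sup>+ R. f (R, s) \<partial>lborel) \<partial>M)"
    by (rule Fubini[symmetric])
  moreover have "(\<integral>\<^sup>+ R. f (R, s) \<partial>lborel) = h s * ennreal (2 * \<delta>)" for s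
  proof -
    have "(\<integral>\<^sup>+ R. f (R, s) \<partial>lborel) = (\<integral>\<^sup>+ R. h s * indicator {g s - \<delta> .. g s + \<delta>} R \<partial>lborel)"
      by (intro nn_integral_cong) (auto simp: f_def abs_le_iff split: split_indicator)
    then show ?thesis
      using \<delta> by (simp add: nn_integral_cmult_indicator)
  qed
  moreover have "f (R, s) = h s * indicator {s. \<bar>g s - R\<bar> \<le> \<delta>} s" for R s
    by (simp add: f_def indicator_def)
  ultimately show ?thesis
    using h by (simp add: nn_integral_multc mult.commute)
qed

lemma nn_integral_Omega_bdry_le:
  fixes \<pi> :: "('a::euclidean_space \<times> 'a) measure" and h :: "'a \<times> 'a \<Rightarrow> ennreal"
  assumes \<pi>: "sets \<pi> = sets borel" "finite_measure \<pi>" and h: "h \<in> borel_measurable borel"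
    and \<delta>: "0 \<le> \<delta>" and close: "AE s in \<pi>. s \<in> hashset 3 \<longrightarrow> norm (fst s - snd s) \<le> \<delta>"
  shows "(\<integral>\<^sup>+ R \<in> {2..3}. (\<integral>\<^sup>+ s \<in> Omega_bdry R. h s \<partial>\<pi>) \<partial>lborel)
           \<le> ennreal (2 * \<delta>) * (\<integral>\<^sup>+ s \<in> hashset 3. h s \<partial>\<pi>)"
proof -
  have meas: "borel_measurable \<pi> = borel_measurable borel"
    by (rule measurable_cong_sets[OF \<pi>(1) refl])
  have "hashset 3 = fst -` ball (0::'a) 3 \<union> snd -` ball 0 3"
    by (auto simp: hashset_def)
  then have hash: "hashset 3 \<in> sets (borel :: ('a \<times> 'a) measure)"
    by (simp add: borel_open open_Un open_vimage_fst open_vimage_snd)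
  have layer: "(\<integral>\<^sup>+ s \<in> Omega_bdry R. h s \<partial>\<pi>)
      \<le> (\<integral>\<^sup>+ s. h s * indicator (hashset 3) s * indicator {s. \<bar>norm (fst s) - R\<bar> \<le> \<delta>} s \<partial>\<pi>)" for R
  proof (rule nn_integral_mono_AE)
    show "AE s in \<pi>. h s * indicator (Omega_bdry R) s
        \<le> h s * indicator (hashset 3) s * indicator {s. \<bar>norm (fst s) - R\<bar> \<le> \<delta>} s"
      using close
    proof eventually_elim
      case (elim s)
      show ?case
      proof (cases "s \<in> Omega_bdry R")
        case True
        then obtain t where "s \<in> hashset 3" "t \<in> {0..1}" "t *\<^sub>R fst s + (1 - t) *\<^sub>R snd s \<in> sphere 0 R"
          by (auto simp: Omega_bdry_def Omega_def)
        with elim have "\<bar>norm (fst s) - R\<bar> \<le> \<delta>"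
          using segment_sphere_norm_close by fastforce
        then show ?thesis
          using True \<open>s \<in> hashset 3\<close> by simp
      qed simp
    qed
  qed
  have "(\<integral>\<^sup>+ R \<in> {2..3}. (\<integral>\<^sup>+ s \<in> Omega_bdry R. h s \<partial>\<pi>) \<partial>lborel)
      \<le> (\<integral>\<^sup>+ R. (\<integral>\<^sup>+ s. h s * indicator (hashset 3) s * indicator {s. \<bar>norm (fst s) - R\<bar> \<le> \<delta>} s \<partial>\<pi>) \<partial>lborel)"
    using layer by (intro nn_integral_mono) (auto split: split_indicator)
  also have "\<dots> = ennreal (2 * \<delta>) * (\<integral>\<^sup>+ s \<in> hashset 3. h s \<partial>\<pi>)"
  proof (rule nn_integral_shell_indicator[OF _ _ _ \<delta>])
    show "sigma_finite_measure \<pi>"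
      using \<pi>(2) by (simp add: finite_measure_def)
    show "(\<lambda>s. norm (fst s)) \<in> borel_measurable \<pi>"
      unfolding meas by (intro borel_measurable_continuous_onI continuous_intros)
    show "(\<lambda>s. h s * indicator (hashset 3) s) \<in> borel_measurable \<pi>"
      unfolding meas using h hash by (intro borel_measurable_times_ennreal borel_measurable_indicator)
  qed
  finally show ?thesis .
qed

lemma boundary_layer_estimates:
  fixes c :: "'a::euclidean_space \<Rightarrow> real" and \<pi> :: "('a \<times> 'a) measure"
  assumes p: "1 < p" and La: "1 \<le> \<Lambda>" and c: "cost_assms p \<Lambda> c"
    and cpl: "\<pi> \<in> couplings lam mu" and flam: "finite_measure lam" and fmu: "finite_measure mu"
    and cyc: "c_cyclically_monotone c (msupp \<pi>)"
    and Q: "E_fun c \<pi> 4 + D_fun p lam mu 4 = ennreal q" and q: "0 \<le> q" "q \<le> 1"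
    and small: "2 * displacement_const p \<Lambda> DIM('a) * q \<le> 1"
  shows "(\<integral>\<^sup>+ R \<in> {2..3}. (\<integral>\<^sup>+ z \<in> Omega_bdry R. ennreal (c (fst z - snd z)) \<partial>\<pi>) \<partial>lborel)
           \<le> ennreal (8 * vol_ball 4 TYPE('a) * displacement_const p \<Lambda> DIM('a) powr (1 / (p + DIM('a)))
                       * q powr (1 + 1 / (p + DIM('a))))"
    and "(\<integral>\<^sup>+ R \<in> {2..3}. emeasure \<pi> (Omega_bdry R) \<partial>lborel)
           \<le> ennreal (8 * vol_ball 4 TYPE('a) * displacement_const p \<Lambda> DIM('a) powr (1 / (p + DIM('a)))
                       * q powr (1 / (p + DIM('a))))"
proof -
  define K N V where "K = displacement_const p \<Lambda> DIM('a)" and "N = p + real DIM('a)"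
    and "V = vol_ball 4 TYPE('a)"
  define \<delta> where "\<delta> = (K * q) powr (1 / N)"
  have V: "0 < V" and K: "0 < K"
    using La by (simp_all add: V_def vol_ball_pos K_def displacement_const_pos)
  have \<delta>: "0 \<le> \<delta>" and two_\<delta>: "2 * \<delta> = 2 * K powr (1 / N) * q powr (1 / N)"
    using K q by (simp_all add: \<delta>_def powr_mult)
  have Q': "E_fun c \<pi> 4 + D_fun p lam mu 4 \<le> ennreal q"
    using Q by simp
  have q1: "ennreal q \<le> 1"
    using q(2) by simp
  note E = E_fun_D_fun_le_parts(1)[OF Q']
  note D = order_trans[OF E_fun_D_fun_le_parts(2)[OF Q'] q1] order_trans[OF E_fun_D_fun_le_parts(3)[OF Q'] q1]
  have close: "AE s in \<pi>. s \<in> hashset 3 \<longrightarrow> norm (fst s - snd s) \<le> \<delta>"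
    using AE_in_msupp[OF couplings_sets(1)[OF cpl]] support_displacement_le[OF p La c cpl flam fmu cyc Q' q small]
    by (auto simp: \<delta>_def K_def N_def elim!: eventually_mono)
  note Omega_bdry_le = nn_integral_Omega_bdry_le[OF couplings_sets(1)[OF cpl] couplings_finite_measure[OF cpl flam] _ \<delta> close]
  have "continuous_on UNIV (\<lambda>s::'a \<times> 'a. fst s - snd s)"
    by (intro continuous_intros)
  from continuous_on_compose2[OF cost_assms_continuous[OF c] this subset_UNIV]
  have cost_meas: "(\<lambda>s. ennreal (c (fst s - snd s))) \<in> borel_measurable borel"
    by (intro measurable_compose[OF borel_measurable_continuous_onI measurable_ennreal])
  have q_pow: "q powr (1 + 1 / N) = q * q powr (1 / N)"
    using q by (simp add: powr_add)
  have "(\<integral>\<^sup>+ R \<in> {2..3}. (\<integral>\<^sup>+ z \<in> Omega_bdry R. ennreal (c (fst z - snd z)) \<partial>\<pi>) \<partial>lborel)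
      \<le> ennreal (2 * \<delta>) * (\<integral>\<^sup>+ s \<in> hashset 3. ennreal (c (fst s - snd s)) \<partial>\<pi>)"
    by (rule Omega_bdry_le[OF cost_meas])
  also have "\<dots> \<le> ennreal (2 * \<delta>) * ennreal (q * V)"
    unfolding V_def by (intro mult_left_mono cost_hashset_le E) simp
  also have "\<dots> \<le> ennreal (8 * V * K powr (1 / N) * q powr (1 + 1 / N))"
    using q V K unfolding q_pow two_\<delta>
    by (simp add: ennreal_mult''[symmetric] mult_ac mult_right_mono)
  finally show "(\<integral>\<^sup>+ R \<in> {2..3}. (\<integral>\<^sup>+ z \<in> Omega_bdry R. ennreal (c (fst z - snd z)) \<partial>\<pi>) \<partial>lborel)
      \<le> ennreal (8 * vol_ball 4 TYPE('a) * displacement_const p \<Lambda> DIM('a) powr (1 / (p + DIM('a)))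
                  * q powr (1 + 1 / (p + DIM('a))))"
    by (simp add: K_def N_def V_def)
  have "emeasure \<pi> (Omega_bdry R) \<le> (\<integral>\<^sup>+ s \<in> Omega_bdry R. 1 \<partial>\<pi>)" for R
    by (cases "Omega_bdry R \<in> sets \<pi>") (simp_all add: emeasure_notin_sets)
  then have "(\<integral>\<^sup>+ R \<in> {2..3}. emeasure \<pi> (Omega_bdry R) \<partial>lborel)
      \<le> (\<integral>\<^sup>+ R \<in> {2..3}. (\<integral>\<^sup>+ s \<in> Omega_bdry R. 1 \<partial>\<pi>) \<partial>lborel)"
    by (intro nn_integral_mono mult_right_mono) simp_all
  also have "\<dots> \<le> ennreal (2 * \<delta>) * (\<integral>\<^sup>+ s \<in> hashset 3. 1 \<partial>\<pi>)"
    by (rule Omega_bdry_le) simp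
  also have "\<dots> = ennreal (2 * \<delta>) * emeasure \<pi> (hashset 3)"
  proof -
    have "hashset 3 = fst -` ball (0::'a) 3 \<union> snd -` ball 0 3"
      by (auto simp: hashset_def)
    then have "hashset 3 \<in> sets \<pi>"
      unfolding couplings_sets(1)[OF cpl] by (simp add: borel_open open_Un open_vimage_fst open_vimage_snd)
    then show ?thesis
      by simp
  qed
  also have "\<dots> \<le> ennreal (2 * \<delta>) * ennreal (4 * V)"
    unfolding V_def by (intro mult_left_mono emeasure_hashset_le_of_D_part[OF p cpl flam fmu D]) simp
  also have "\<dots> = ennreal (8 * V * K powr (1 / N) * q powr (1 / N))"
    using V unfolding two_\<delta> by (simp add: ennreal_mult''[symmetric] mult_ac)
  finally show "(\<integral>\<^sup>+ R \<in> {2..3}. emeasure \<pi> (Omega_bdry R) \<partial>lborel)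
      \<le> ennreal (8 * vol_ball 4 TYPE('a) * displacement_const p \<Lambda> DIM('a) powr (1 / (p + DIM('a)))
                  * q powr (1 / (p + DIM('a))))"
    by (simp add: K_def N_def V_def)
qed

lemma enn2real_le_min_bounds:
  fixes x :: ennreal
  assumes x: "x \<le> ennreal (min 1 (1 / (2 * K)))" and K: "0 < K"
  shows "x = ennreal (enn2real x)" "enn2real x \<le> 1" "2 * K * enn2real x \<le> 1"
proof -
  have "x \<noteq> top"
    using neq_top_trans[OF ennreal_neq_top x] .
  then show x_eq: "x = ennreal (enn2real x)"
    by (simp add: ennreal_enn2real_if)
  have "ennreal (enn2real x) \<le> ennreal (min 1 (1 / (2 * K)))"
    using x unfolding x_eq[symmetric] .
  then have q: "enn2real x \<le> min 1 (1 / (2 * K))"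
    using K by (simp add: ennreal_le_iff)
  then show "enn2real x \<le> 1"
    by simp
  have "2 * K * enn2real x \<le> 2 * K * (1 / (2 * K))"
    using q K by (intro mult_left_mono) auto
  then show "2 * K * enn2real x \<le> 1"
    using K by simp
qed

theorem corollary3p3:
  fixes p \<Lambda> :: real
  assumes "1 < p" and "1 \<le> \<Lambda>"
  shows "\<exists>\<epsilon>0>0. \<exists>C>0. \<forall>(c::'a::euclidean_space \<Rightarrow> real) (lam::'a measure) (\<mu>::'a measure)
            (\<pi>::('a \<times> 'a) measure).
     cost_assms p \<Lambda> c \<and>
     sets lam = sets borel \<and> sets \<mu> = sets borel \<and>
     finite_measure lam \<and> finite_measure \<mu> \<and>
     emeasure lam UNIV = emeasure \<mu> UNIV \<and>
     \<pi> \<in> couplings lam \<mu> \<and>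
     c_cyclically_monotone c (msupp \<pi>) \<and>
     E_fun c \<pi> 4 + D_fun p lam \<mu> 4 \<le> ennreal \<epsilon>0
     \<longrightarrow>
     (\<integral>\<^sup>+ R \<in> {2..3}. (\<integral>\<^sup>+ z \<in> Omega_bdry R. ennreal (c (fst z - snd z)) \<partial>\<pi>) \<partial>lborel)
        \<le> ennreal (C * enn2real (E_fun c \<pi> 4 + D_fun p lam \<mu> 4) powr (1 + 1 / (p + real DIM('a))))
     \<and>
     (\<integral>\<^sup>+ R \<in> {2..3}. emeasure \<pi> (Omega_bdry R) \<partial>lborel)
        \<le> ennreal (C * enn2real (E_fun c \<pi> 4 + D_fun p lam \<mu> 4) powr (1 / (p + real DIM('a))))"
proof -
  define K where "K = displacement_const p \<Lambda> DIM('a)"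
  define C where "C = 8 * vol_ball 4 TYPE('a) * K powr (1 / (p + DIM('a)))"
  have K: "0 < K"
    using assms(2) by (simp add: K_def displacement_const_pos)
  then have "0 < C" "0 < min 1 (1 / (2 * K))"
    by (simp_all add: C_def vol_ball_pos)
  show ?thesis
  proof (rule exI, rule conjI[OF \<open>0 < min 1 (1 / (2 * K))\<close>], rule exI, rule conjI[OF \<open>0 < C\<close>],
      intro allI impI, goal_cases)
    case (1 c lam \<mu> \<pi>)
    then have hyps: "cost_assms p \<Lambda> c" "\<pi> \<in> couplings lam \<mu>" "finite_measure lam" "finite_measure \<mu>"
        "c_cyclically_monotone c (msupp \<pi>)"
      and small: "E_fun c \<pi> 4 + D_fun p lam \<mu> 4 \<le> ennreal (min 1 (1 / (2 * K)))"
      by blast+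
    note q = enn2real_le_min_bounds[OF small K]
    from boundary_layer_estimates[OF assms hyps q(1) enn2real_nonneg q(2) q(3)[unfolded K_def]]
    show ?case
      unfolding C_def K_def by (intro conjI)
  qed
qed

end
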